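(* Consider the following two-stage game between Alice (A) and Bob (B). $X_1^A,X_1^B$ are independent and uniform on $\{-1,+1\}$; $X_2=X_1^B$. At stage 1 only Bob acts, choosing $U_1^B\in\{-1,+1\}$ knowing $H_1^B=X_1^B$ (Alice knows $H_1^A=X_1^A$). At stage 2 Alice and Bob act simultaneously, choosing $U_2^A,U_2^B\in\{-1,0,+1\}$, with information $H_2^A=(X_1^A,U_1^B)$ and $H_2^B=(X_1^B,U_1^B)$. Rewards: $R_1^A=-1$ if $U_1^B=-1$ and $0$ otherwise; $R_2^A=1$ if $U_2^A=X_2$ or $U_2^A=0$, and $0$ otherwise; $R_1^B=0.2$ if $U_1^B=-1$ and $0$ otherwise; $R_2^B=-1$ if $U_2^A=U_2^B$ and $0$ otherwise; total payoffs are $R_1^i+R_2^i$. Let $K_1^A=X_1^A$, $K_2^A=U_1^B$, and $K_t^B=H_t^B$ for $t=1,2$. Then the set of expected payoff profiles of weak perfect Bayesian equilibria whose strategy profile is $K$-based (i.e. Alice's stage-2 mixed action depends only on $U_1^B$) is a proper subset of the set of expected payoff profiles of all weak perfect Bayesian equilibria.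
   Context: A behavioral strategy of a player maps each of that player's information realizations to a distribution over actions. An assessment $(g,\mu)$ consists of a behavioral strategy profile $g$ and a belief system $\mu$ assigning to each information set of each player a probability distribution over the nodes (complete histories of moves of nature and players) in that information set. $(g,\mu)$ is a weak perfect Bayesian equilibrium (wPBE) if (i) $g$ is sequentially rational given $\mu$: at every information set of every player, the player's continuation strategy maximizes their expected continuation payoff computed with belief $\mu$ over nodes and the others' strategies $g$; and (ii) at every information set reached with positive probability under $g$, $\mu$ is obtained from $g$ by Bayes' rule (no restriction off the equilibrium path). *)

theory Defs
  imports Complex_Main
begin

text \<open>The two-stage game of Alice and Bob.  Binary values (X_1^A, X_1^B, U_1^B) are
  integers in S1 = {-1,1}; stage-2 actions are in S2 = {-1,0,1}.  X_2 = X_1^B.\<close>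

definition S1 :: "int set" where "S1 = {-1, 1}"
definition S2 :: "int set" where "S2 = {-1, 0, 1}"

definition is_dist :: "int set \<Rightarrow> (int \<Rightarrow> real) \<Rightarrow> bool" where
  "is_dist A p \<longleftrightarrow> (\<forall>v\<in>A. 0 \<le> p v) \<and> (\<Sum>v\<in>A. p v) = 1"

text \<open>Alice's behavioral strategy: a xa u v = probability of U_2^A = v given H_2^A = (xa,u).
  (Alice has no action at stage 1.)\<close>
type_synonym alice_strat = "int \<Rightarrow> int \<Rightarrow> int \<Rightarrow> real"

text \<open>Bob's behavioral strategy: b1 xb u = probability of U_1^B = u given H_1^B = xb;
  b2 xb u v = probability of U_2^B = v given H_2^B = (xb,u).\<close>
record bob_strat =
  b1 :: "int \<Rightarrow> int \<Rightarrow> real"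
  b2 :: "int \<Rightarrow> int \<Rightarrow> int \<Rightarrow> real"

text \<open>Belief system: for each information set a distribution over the nodes in it.
  muA1 xa xb: Alice at H_1^A = xa, node (xa,xb).
  muB1 xb xa: Bob at H_1^B = xb, node (xa,xb).
  muA2 xa u xb: Alice at H_2^A = (xa,u), node (xa,xb,u).
  muB2 xb u xa: Bob at H_2^B = (xb,u), node (xa,xb,u).\<close>
record beliefs =
  muA1 :: "int \<Rightarrow> int \<Rightarrow> real"
  muB1 :: "int \<Rightarrow> int \<Rightarrow> real"
  muA2 :: "int \<Rightarrow> int \<Rightarrow> int \<Rightarrow> real"
  muB2 :: "int \<Rightarrow> int \<Rightarrow> int \<Rightarrow> real"

definition valid_alice :: "alice_strat \<Rightarrow> bool" where
  "valid_alice a \<longleftrightarrow> (\<forall>xa\<in>S1. \<forall>u\<in>S1. is_dist S2 (a xa u))"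

definition valid_bob :: "bob_strat \<Rightarrow> bool" where
  "valid_bob b \<longleftrightarrow> (\<forall>xb\<in>S1. is_dist S1 (b1 b xb)) \<and>
                    (\<forall>xb\<in>S1. \<forall>u\<in>S1. is_dist S2 (b2 b xb u))"

definition valid_beliefs :: "beliefs \<Rightarrow> bool" where
  "valid_beliefs \<mu> \<longleftrightarrow>
     (\<forall>xa\<in>S1. is_dist S1 (muA1 \<mu> xa)) \<and> (\<forall>xb\<in>S1. is_dist S1 (muB1 \<mu> xb)) \<and>
     (\<forall>xa\<in>S1. \<forall>u\<in>S1. is_dist S1 (muA2 \<mu> xa u)) \<and>
     (\<forall>xb\<in>S1. \<forall>u\<in>S1. is_dist S1 (muB2 \<mu> xb u))"

text \<open>Rewards (X_2 = X_1^B = xb).\<close>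
definition rA1 :: "int \<Rightarrow> real" where "rA1 u = (if u = -1 then -1 else 0)"
definition rA2 :: "int \<Rightarrow> int \<Rightarrow> real" where
  "rA2 xb va = (if va = xb \<or> va = 0 then 1 else 0)"
definition rB1 :: "int \<Rightarrow> real" where "rB1 u = (if u = -1 then 1/5 else 0)"
definition rB2 :: "int \<Rightarrow> int \<Rightarrow> real" where "rB2 va vb = (if va = vb then -1 else 0)"

definition stage2_A :: "alice_strat \<Rightarrow> bob_strat \<Rightarrow> int \<Rightarrow> int \<Rightarrow> int \<Rightarrow> real" where
  "stage2_A a b xa xb u = (\<Sum>va\<in>S2. \<Sum>vb\<in>S2. a xa u va * b2 b xb u vb * rA2 xb va)"
definition stage2_B :: "alice_strat \<Rightarrow> bob_strat \<Rightarrow> int \<Rightarrow> int \<Rightarrow> int \<Rightarrow> real" where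
  "stage2_B a b xa xb u = (\<Sum>va\<in>S2. \<Sum>vb\<in>S2. a xa u va * b2 b xb u vb * rB2 va vb)"

definition cont1_A :: "alice_strat \<Rightarrow> bob_strat \<Rightarrow> int \<Rightarrow> int \<Rightarrow> real" where
  "cont1_A a b xa xb = (\<Sum>u\<in>S1. b1 b xb u * (rA1 u + stage2_A a b xa xb u))"
definition cont1_B :: "alice_strat \<Rightarrow> bob_strat \<Rightarrow> int \<Rightarrow> int \<Rightarrow> real" where
  "cont1_B a b xa xb = (\<Sum>u\<in>S1. b1 b xb u * (rB1 u + stage2_B a b xa xb u))"

definition JA :: "alice_strat \<Rightarrow> bob_strat \<Rightarrow> real" where
  "JA a b = (\<Sum>xa\<in>S1. \<Sum>xb\<in>S1. 1/4 * cont1_A a b xa xb)"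
definition JB :: "alice_strat \<Rightarrow> bob_strat \<Rightarrow> real" where
  "JB a b = (\<Sum>xa\<in>S1. \<Sum>xb\<in>S1. 1/4 * cont1_B a b xa xb)"

definition seq_rational :: "alice_strat \<Rightarrow> bob_strat \<Rightarrow> beliefs \<Rightarrow> bool" where
  "seq_rational a b \<mu> \<longleftrightarrow>
    (\<forall>xa\<in>S1. \<forall>a'. valid_alice a' \<longrightarrow>
       (\<Sum>xb\<in>S1. muA1 \<mu> xa xb * cont1_A a' b xa xb) \<le> (\<Sum>xb\<in>S1. muA1 \<mu> xa xb * cont1_A a b xa xb)) \<and>
    (\<forall>xb\<in>S1. \<forall>b'. valid_bob b' \<longrightarrow>
       (\<Sum>xa\<in>S1. muB1 \<mu> xb xa * cont1_B a b' xa xb) \<le> (\<Sum>xa\<in>S1. muB1 \<mu> xb xa * cont1_B a b xa xb)) \<and>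
    (\<forall>xa\<in>S1. \<forall>u\<in>S1. \<forall>a'. valid_alice a' \<longrightarrow>
       (\<Sum>xb\<in>S1. muA2 \<mu> xa u xb * stage2_A a' b xa xb u) \<le> (\<Sum>xb\<in>S1. muA2 \<mu> xa u xb * stage2_A a b xa xb u)) \<and>
    (\<forall>xb\<in>S1. \<forall>u\<in>S1. \<forall>b'. valid_bob b' \<longrightarrow>
       (\<Sum>xa\<in>S1. muB2 \<mu> xb u xa * stage2_B a b' xa xb u) \<le> (\<Sum>xa\<in>S1. muB2 \<mu> xb u xa * stage2_B a b xa xb u))"

definition node1_prob :: "int \<Rightarrow> int \<Rightarrow> real" where "node1_prob xa xb = 1/4"
definition node2_prob :: "bob_strat \<Rightarrow> int \<Rightarrow> int \<Rightarrow> int \<Rightarrow> real" where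
  "node2_prob b xa xb u = 1/4 * b1 b xb u"

definition bayes_consistent :: "bob_strat \<Rightarrow> beliefs \<Rightarrow> bool" where
  "bayes_consistent b \<mu> \<longleftrightarrow>
    (\<forall>xa\<in>S1. (\<Sum>xb'\<in>S1. node1_prob xa xb') > 0 \<longrightarrow>
       (\<forall>xb\<in>S1. muA1 \<mu> xa xb = node1_prob xa xb / (\<Sum>xb'\<in>S1. node1_prob xa xb'))) \<and>
    (\<forall>xb\<in>S1. (\<Sum>xa'\<in>S1. node1_prob xa' xb) > 0 \<longrightarrow>
       (\<forall>xa\<in>S1. muB1 \<mu> xb xa = node1_prob xa xb / (\<Sum>xa'\<in>S1. node1_prob xa' xb))) \<and>
    (\<forall>xa\<in>S1. \<forall>u\<in>S1. (\<Sum>xb'\<in>S1. node2_prob b xa xb' u) > 0 \<longrightarrow>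
       (\<forall>xb\<in>S1. muA2 \<mu> xa u xb = node2_prob b xa xb u / (\<Sum>xb'\<in>S1. node2_prob b xa xb' u))) \<and>
    (\<forall>xb\<in>S1. \<forall>u\<in>S1. (\<Sum>xa'\<in>S1. node2_prob b xa' xb u) > 0 \<longrightarrow>
       (\<forall>xa\<in>S1. muB2 \<mu> xb u xa = node2_prob b xa xb u / (\<Sum>xa'\<in>S1. node2_prob b xa' xb u)))"

definition wPBE :: "alice_strat \<Rightarrow> bob_strat \<Rightarrow> beliefs \<Rightarrow> bool" where
  "wPBE a b \<mu> \<longleftrightarrow> valid_alice a \<and> valid_bob b \<and> valid_beliefs \<mu> \<and>
                   seq_rational a b \<mu> \<and> bayes_consistent b \<mu>"

text \<open>K-based: Alice's stage-2 mixed action depends on (X_1^A, U_1^B) only through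
  K_2^A = U_1^B.  Bob's K_t^B = H_t^B imposes no restriction.\<close>
definition K_based :: "alice_strat \<Rightarrow> bool" where
  "K_based a \<longleftrightarrow> (\<forall>xa\<in>S1. \<forall>xa'\<in>S1. \<forall>u\<in>S1. \<forall>v\<in>S2. a xa u v = a xa' u v)"

end

theory Submission
  imports Defs
begin

text \<open>At stage 2 Alice secures reward 1 by playing 0, and a guess \<open>\<plusminus>1\<close> of \<open>X\<^sub>2\<close> earns
  less as soon as she believes it may be wrong; so in every wPBE she never mixes \<open>+1\<close> and
  \<open>-1\<close>. If her stage-2 action depends only on \<open>U\<^sub>1\<^sup>B\<close>, Bob can play an action she never
  plays, whatever \<open>X\<^sub>1\<^sup>A\<close> is; hence his stage-2 payoff is 0, at stage 1 he takes the bonus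
  of \<open>U\<^sub>1\<^sup>B = -1\<close>, and Alice pays 1 for it: her expected payoff is at most 0. Without the
  restriction there is a wPBE in which Alice earns 1.\<close>

lemma sum_S1 [simp]: "(\<Sum>x\<in>S1. f x) = f (-1) + f 1"
  by (simp add: S1_def)

lemma sum_S2 [simp]: "(\<Sum>x\<in>S2. f x) = f (-1) + f 0 + f 1"
  by (simp add: S2_def add.assoc)

lemma mem_S1 [simp]: "x \<in> S1 \<longleftrightarrow> x = -1 \<or> x = 1"
  by (auto simp: S1_def)

lemma mem_S2 [simp]: "x \<in> S2 \<longleftrightarrow> x = -1 \<or> x = 0 \<or> x = 1"
  by (auto simp: S2_def)

lemma is_dist_S1_iff: "is_dist S1 p \<longleftrightarrow> 0 \<le> p (-1) \<and> 0 \<le> p 1 \<and> p (-1) + p 1 = 1"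
  by (auto simp: is_dist_def)

lemma is_dist_S2_iff:
  "is_dist S2 p \<longleftrightarrow> 0 \<le> p (-1) \<and> 0 \<le> p 0 \<and> 0 \<le> p 1 \<and> p (-1) + p 0 + p 1 = 1"
  by (auto simp: is_dist_def)

lemma is_dist_point: "finite A \<Longrightarrow> v \<in> A \<Longrightarrow> is_dist A (\<lambda>w. if w = v then 1 else 0)"
  by (simp add: is_dist_def)

lemma is_dist_average_const:
  assumes "is_dist A m" "\<And>x. x \<in> A \<Longrightarrow> f x = c"
  shows "(\<Sum>x\<in>A. m x * f x) = c"
proof -
  have "(\<Sum>x\<in>A. m x * f x) = (\<Sum>x\<in>A. m x) * c"
    using assms(2) by (simp add: sum_distrib_right)
  then show ?thesis
    using assms(1) by (simp add: is_dist_def)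
qed

lemma is_dist_average_le:
  assumes "is_dist A m" "\<And>x. x \<in> A \<Longrightarrow> f x \<le> c"
  shows "(\<Sum>x\<in>A. m x * f x) \<le> c"
proof -
  have "(\<Sum>x\<in>A. m x * f x) \<le> (\<Sum>x\<in>A. m x * c)"
    using assms by (intro sum_mono mult_left_mono) (auto simp: is_dist_def)
  also have "\<dots> = c"
    by (rule is_dist_average_const[OF assms(1)]) simp
  finally show ?thesis .
qed

lemma valid_alice_update:
  "valid_alice a \<Longrightarrow> is_dist S2 p \<Longrightarrow> valid_alice (a(xa := (a xa)(u := p)))"
  by (simp add: valid_alice_def)

lemma valid_bob_update_b1:
  "valid_bob b \<Longrightarrow> is_dist S1 p \<Longrightarrow> valid_bob (b\<lparr>b1 := (b1 b)(xb := p)\<rparr>)"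
  by (simp add: valid_bob_def)

lemma valid_bob_update_b2:
  "valid_bob b \<Longrightarrow> is_dist S2 p \<Longrightarrow> valid_bob (b\<lparr>b2 := (b2 b)(xb := (b2 b xb)(u := p))\<rparr>)"
  by (simp add: valid_bob_def)

lemma stage2_A_eq:
  assumes "valid_bob b" "xb \<in> S1" "u \<in> S1"
  shows "stage2_A a b xa xb u = a xa u 0 + a xa u xb"
proof -
  have "b2 b xb u (-1) + b2 b xb u 0 + b2 b xb u 1 = 1"
    using assms unfolding valid_bob_def is_dist_S2_iff by auto
  then show ?thesis
    using assms(2) unfolding stage2_A_def rA2_def
    by (auto simp: algebra_simps simp flip: distrib_left)
qed

lemma stage2_B_eq: "stage2_B a b xa xb u = - (\<Sum>v\<in>S2. a xa u v * b2 b xb u v)"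
  unfolding stage2_B_def rB2_def by simp

lemma stage2_A_le_1:
  assumes "valid_alice a" "valid_bob b" "xa \<in> S1" "xb \<in> S1" "u \<in> S1"
  shows "stage2_A a b xa xb u \<le> 1"
proof -
  have "0 \<le> a xa u (-1)" "0 \<le> a xa u 0" "0 \<le> a xa u 1" "a xa u (-1) + a xa u 0 + a xa u 1 = 1"
    using assms unfolding valid_alice_def is_dist_S2_iff by auto
  then show ?thesis
    using stage2_A_eq[OF assms(2,4,5)] assms(4) by auto
qed

lemma stage2_B_nonpos:
  assumes "valid_alice a" "valid_bob b" "xa \<in> S1" "xb \<in> S1" "u \<in> S1"
  shows "stage2_B a b xa xb u \<le> 0"
proof -
  have "0 \<le> a xa u v" "0 \<le> b2 b xb u v" if "v \<in> S2" for v
    using assms that unfolding valid_alice_def valid_bob_def is_dist_def by auto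
  then show ?thesis
    unfolding stage2_B_eq by (intro neg_le_0_iff_le[THEN iffD2] sum_nonneg mult_nonneg_nonneg)
qed

lemma wPBE_alice_stage2_unmixed:
  assumes eq: "wPBE a b \<mu>" and xa: "xa \<in> S1" and u: "u \<in> S1"
  shows "a xa u 1 = 0 \<or> a xa u (-1) = 0"
proof -
  let ?m = "muA2 \<mu> xa u" and ?p = "a xa u"
  have va: "valid_alice a" and vb: "valid_bob b"
    and m: "0 \<le> ?m (-1)" "0 \<le> ?m 1" "?m (-1) + ?m 1 = 1"
    and p: "0 \<le> ?p (-1)" "0 \<le> ?p 0" "0 \<le> ?p 1" "?p (-1) + ?p 0 + ?p 1 = 1"
    using eq xa u unfolding wPBE_def valid_beliefs_def valid_alice_def is_dist_S1_iff is_dist_S2_iff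
    by auto
  define a' where "a' = a(xa := (a xa)(u := \<lambda>v. if v = 0 then 1 else 0))"
  have "valid_alice a'"
    unfolding a'_def by (rule valid_alice_update[OF va is_dist_point]) (simp_all add: S2_def)
  then have "(\<Sum>xb\<in>S1. ?m xb * stage2_A a' b xa xb u) \<le> (\<Sum>xb\<in>S1. ?m xb * stage2_A a b xa xb u)"
    using eq xa u unfolding wPBE_def seq_rational_def by blast
  then have "?m (-1) + ?m 1 \<le> ?m (-1) * (?p 0 + ?p (-1)) + ?m 1 * (?p 0 + ?p 1)"
    using stage2_A_eq[OF vb] u by (simp add: a'_def)
  also have "\<dots> = 1 - (?m (-1) * ?p 1 + ?m 1 * ?p (-1))"
    using m(3) p(4) by algebra
  finally have "?m (-1) * ?p 1 + ?m 1 * ?p (-1) \<le> 0"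
    using m(3) by simp
  moreover have "0 \<le> ?m (-1) * ?p 1" "0 \<le> ?m 1 * ?p (-1)"
    using m p by simp_all
  ultimately have "?m (-1) * ?p 1 = 0" "?m 1 * ?p (-1) = 0"
    by linarith+
  then show ?thesis
    using m(3) by auto
qed

lemma K_based_stage2_B_indep:
  assumes "K_based a" "xa \<in> S1" "xa' \<in> S1" "u \<in> S1"
  shows "stage2_B a b xa xb u = stage2_B a b xa' xb u"
proof -
  have "a xa u v = a xa' u v" if "v \<in> S2" for v
    using assms that unfolding K_based_def by blast
  then show ?thesis
    unfolding stage2_B_def by simp
qed

lemma wPBE_K_based_bob_stage2_zero:
  assumes eq: "wPBE a b \<mu>" and K: "K_based a" and xa: "xa \<in> S1" and xb: "xb \<in> S1" and u: "u \<in> S1"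
  shows "stage2_B a b xa xb u = 0"
proof -
  have va: "valid_alice a" and vb: "valid_bob b" and m: "is_dist S1 (muB2 \<mu> xb u)"
    using eq xb u unfolding wPBE_def valid_beliefs_def by auto
  obtain v0 where v0: "v0 \<in> S1" "a xa u v0 = 0"
    using wPBE_alice_stage2_unmixed[OF eq xa u] by fastforce
  define b' where "b' = b\<lparr>b2 := (b2 b)(xb := (b2 b xb)(u := \<lambda>v. if v = v0 then 1 else 0))\<rparr>"
  have "valid_bob b'"
    unfolding b'_def using v0(1) by (intro valid_bob_update_b2[OF vb] is_dist_point) (auto simp: S2_def)
  then have "(\<Sum>x\<in>S1. muB2 \<mu> xb u x * stage2_B a b' x xb u)
      \<le> (\<Sum>x\<in>S1. muB2 \<mu> xb u x * stage2_B a b x xb u)"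
    using eq xb u unfolding wPBE_def seq_rational_def by blast
  moreover have "stage2_B a b' x xb u = 0" if "x \<in> S1" for x
  proof -
    have "stage2_B a b' x xb u = stage2_B a b' xa xb u"
      using K_based_stage2_B_indep[OF K that xa u] .
    also have "\<dots> = - a xa u v0"
      using v0(1) unfolding stage2_B_eq b'_def by auto
    finally show ?thesis
      using v0(2) by simp
  qed
  moreover have "(\<Sum>x\<in>S1. muB2 \<mu> xb u x * stage2_B a b x xb u) = stage2_B a b xa xb u"
    using K_based_stage2_B_indep[OF K _ xa u] by (intro is_dist_average_const[OF m]) blast
  ultimately have "0 \<le> stage2_B a b xa xb u"
    by simp
  then show ?thesis
    using stage2_B_nonpos[OF va vb xa xb u] by simp
qed

lemma wPBE_K_based_bob_stage1:
  assumes eq: "wPBE a b \<mu>" and K: "K_based a" and xb: "xb \<in> S1"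
  shows "b1 b xb (-1) = 1"
proof -
  have vb: "valid_bob b" and m: "is_dist S1 (muB1 \<mu> xb)"
    using eq xb unfolding wPBE_def valid_beliefs_def by auto
  have "(\<Sum>xa\<in>S1. muB1 \<mu> xb xa * cont1_B a c xa xb) = b1 c xb (-1) / 5" if "b2 c = b2 b" for c
  proof (rule is_dist_average_const[OF m])
    fix xa :: int assume "xa \<in> S1"
    then show "cont1_B a c xa xb = b1 c xb (-1) / 5"
      using that xb wPBE_K_based_bob_stage2_zero[OF eq K] unfolding cont1_B_def stage2_B_def
      by (simp add: rB1_def)
  qed
  note bob_value = this
  define b' where "b' = b\<lparr>b1 := (b1 b)(xb := \<lambda>u. if u = -1 then 1 else 0)\<rparr>"
  have "valid_bob b'"
    unfolding b'_def by (intro valid_bob_update_b1[OF vb] is_dist_point) (auto simp: S1_def)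
  then have "(\<Sum>xa\<in>S1. muB1 \<mu> xb xa * cont1_B a b' xa xb) \<le> (\<Sum>xa\<in>S1. muB1 \<mu> xb xa * cont1_B a b xa xb)"
    using eq xb unfolding wPBE_def seq_rational_def by blast
  then have "1 \<le> b1 b xb (-1)"
    using bob_value[of b'] bob_value[of b] by (simp add: b'_def)
  moreover have "0 \<le> b1 b xb 1" "b1 b xb (-1) + b1 b xb 1 = 1"
    using vb xb unfolding valid_bob_def is_dist_S1_iff by blast+
  ultimately show ?thesis
    by linarith
qed

lemma wPBE_K_based_JA_nonpos:
  assumes eq: "wPBE a b \<mu>" and K: "K_based a"
  shows "JA a b \<le> 0"
proof -
  have va: "valid_alice a" and vb: "valid_bob b"
    using eq unfolding wPBE_def by auto
  have "cont1_A a b xa xb \<le> 0" if "xa \<in> S1" "xb \<in> S1" for xa xb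
  proof -
    have "b1 b xb (-1) + b1 b xb 1 = 1"
      using vb that(2) unfolding valid_bob_def is_dist_S1_iff by blast
    then have "b1 b xb 1 = 0"
      using wPBE_K_based_bob_stage1[OF eq K that(2)] by simp
    then have "cont1_A a b xa xb = -1 + stage2_A a b xa xb (-1)"
      using wPBE_K_based_bob_stage1[OF eq K that(2)] unfolding cont1_A_def by (simp add: rA1_def)
    then show ?thesis
      using stage2_A_le_1[OF va vb that, of "-1"] by simp
  qed
  then show ?thesis
    unfolding JA_def by (intro sum_nonpos) auto
qed

text \<open>After the off-path signal \<open>U\<^sub>1\<^sup>B = -1\<close> Alice believes \<open>X\<^sub>2 = X\<^sub>1\<^sup>A\<close>, so guessing
  her own type is optimal. Aggregated over her two types her action is then uniform on
  \<open>S2\<close>, so Bob loses 1/3 by matching, more than the bonus 1/5, and keeps \<open>U\<^sub>1\<^sup>B = 1\<close>.\<close>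

definition alice_witness :: alice_strat where
  "alice_witness xa u v =
     (if u = 1 then (if v = 0 then 1 else 0)
      else if v = 0 then 1/3 else if v = xa then 2/3 else 0)"

definition bob_witness :: bob_strat where
  "bob_witness = \<lparr>b1 = (\<lambda>xb u. if u = 1 then 1 else 0), b2 = (\<lambda>xb u v. if v = 1 then 1 else 0)\<rparr>"

definition beliefs_witness :: beliefs where
  "beliefs_witness =
     \<lparr>muA1 = (\<lambda>_ _. 1/2), muB1 = (\<lambda>_ _. 1/2),
      muA2 = (\<lambda>xa u xb. if u = 1 then 1/2 else if xb = xa then 1 else 0),
      muB2 = (\<lambda>_ _ _. 1/2)\<rparr>"

lemma valid_alice_witness: "valid_alice alice_witness"
  unfolding valid_alice_def alice_witness_def is_dist_S2_iff by auto

lemma valid_bob_witness: "valid_bob bob_witness"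
  unfolding valid_bob_def bob_witness_def is_dist_S1_iff is_dist_S2_iff by auto

lemma valid_beliefs_witness: "valid_beliefs beliefs_witness"
  unfolding valid_beliefs_def beliefs_witness_def is_dist_S1_iff by auto

lemma bayes_consistent_witness: "bayes_consistent bob_witness beliefs_witness"
  unfolding bayes_consistent_def
  by (auto simp: beliefs_witness_def bob_witness_def node1_prob_def node2_prob_def S1_def)

lemma alice_witness_stage1_rational:
  assumes "valid_alice a'" "xa \<in> S1"
  shows "(\<Sum>xb\<in>S1. muA1 beliefs_witness xa xb * cont1_A a' bob_witness xa xb)
    \<le> (\<Sum>xb\<in>S1. muA1 beliefs_witness xa xb * cont1_A alice_witness bob_witness xa xb)"
proof -
  have cont: "cont1_A a bob_witness xa xb = stage2_A a bob_witness xa xb 1" for a xb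
    unfolding cont1_A_def by (simp add: bob_witness_def rA1_def)
  have "(\<Sum>xb\<in>S1. muA1 beliefs_witness xa xb * cont1_A a' bob_witness xa xb) \<le> 1"
    unfolding cont using stage2_A_le_1[OF assms(1) valid_bob_witness assms(2)]
    by (intro is_dist_average_le) (auto simp: beliefs_witness_def is_dist_S1_iff)
  also have "\<dots> = (\<Sum>xb\<in>S1. muA1 beliefs_witness xa xb * cont1_A alice_witness bob_witness xa xb)"
    unfolding cont using stage2_A_eq[OF valid_bob_witness]
    by (simp add: beliefs_witness_def alice_witness_def)
  finally show ?thesis .
qed

lemma alice_witness_stage2_rational:
  assumes "valid_alice a'" "xa \<in> S1" "u \<in> S1"
  shows "(\<Sum>xb\<in>S1. muA2 beliefs_witness xa u xb * stage2_A a' bob_witness xa xb u)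
    \<le> (\<Sum>xb\<in>S1. muA2 beliefs_witness xa u xb * stage2_A alice_witness bob_witness xa xb u)"
proof -
  have "(\<Sum>xb\<in>S1. muA2 beliefs_witness xa u xb * stage2_A a' bob_witness xa xb u) \<le> 1"
    using stage2_A_le_1[OF assms(1) valid_bob_witness assms(2) _ assms(3)] assms(2)
    by (intro is_dist_average_le) (auto simp: beliefs_witness_def is_dist_S1_iff)
  also have "\<dots> = (\<Sum>xb\<in>S1. muA2 beliefs_witness xa u xb * stage2_A alice_witness bob_witness xa xb u)"
    using stage2_A_eq[OF valid_bob_witness _ assms(3)] assms(2,3)
    by (auto simp: beliefs_witness_def alice_witness_def)
  finally show ?thesis .
qed

lemma alice_witness_aggregate_stage2_B:
  assumes "valid_bob c" "xb \<in> S1"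
  shows "(\<Sum>xa\<in>S1. stage2_B alice_witness c xa xb (-1)) = - 2/3"
proof -
  have "b2 c xb (-1) (-1) + b2 c xb (-1) 0 + b2 c xb (-1) 1 = 1"
    using assms unfolding valid_bob_def is_dist_S2_iff by auto
  then show ?thesis
    unfolding stage2_B_eq by (simp add: alice_witness_def)
qed

lemma bob_witness_stage1_rational:
  assumes "valid_bob b'" "xb \<in> S1"
  shows "(\<Sum>xa\<in>S1. muB1 beliefs_witness xb xa * cont1_B alice_witness b' xa xb)
    \<le> (\<Sum>xa\<in>S1. muB1 beliefs_witness xb xa * cont1_B alice_witness bob_witness xa xb)"
proof -
  have p: "0 \<le> b1 b' xb (-1)" "0 \<le> b1 b' xb 1"
    using assms unfolding valid_bob_def is_dist_S1_iff by auto
  have "(\<Sum>xa\<in>S1. stage2_B alice_witness b' xa xb 1) \<le> 0"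
    using stage2_B_nonpos[OF valid_alice_witness assms(1) _ assms(2)] by (simp add: add_nonpos_nonpos)
  then have "b1 b' xb 1 * (\<Sum>xa\<in>S1. stage2_B alice_witness b' xa xb 1) \<le> 0"
    using p(2) by (simp add: mult_nonneg_nonpos del: sum_S1)
  moreover have "b1 b' xb (-1) * (2/5 - 2/3) \<le> 0"
    using p(1) by simp
  moreover have "(\<Sum>xa\<in>S1. muB1 beliefs_witness xb xa * cont1_B alice_witness b' xa xb)
     = (b1 b' xb (-1) * (2/5 + (\<Sum>xa\<in>S1. stage2_B alice_witness b' xa xb (-1)))
        + b1 b' xb 1 * (\<Sum>xa\<in>S1. stage2_B alice_witness b' xa xb 1)) / 2"
    unfolding cont1_B_def by (simp add: beliefs_witness_def rB1_def algebra_simps)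
  moreover have "(\<Sum>xa\<in>S1. muB1 beliefs_witness xb xa * cont1_B alice_witness bob_witness xa xb) = 0"
    unfolding cont1_B_def stage2_B_eq by (simp add: alice_witness_def bob_witness_def rB1_def)
  ultimately show ?thesis
    using alice_witness_aggregate_stage2_B[OF assms] by (simp del: sum_S1)
qed

lemma bob_witness_stage2_rational:
  assumes "valid_bob b'" "xb \<in> S1" "u \<in> S1"
  shows "(\<Sum>xa\<in>S1. muB2 beliefs_witness xb u xa * stage2_B alice_witness b' xa xb u)
    \<le> (\<Sum>xa\<in>S1. muB2 beliefs_witness xb u xa * stage2_B alice_witness bob_witness xa xb u)"
proof (cases "u = 1")
  case True
  have "stage2_B alice_witness b' (-1) xb 1 \<le> 0" "stage2_B alice_witness b' 1 xb 1 \<le> 0"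
    using stage2_B_nonpos[OF valid_alice_witness assms(1) _ assms(2)] by simp_all
  moreover have "stage2_B alice_witness bob_witness xa xb 1 = 0" for xa
    unfolding stage2_B_eq by (simp add: alice_witness_def bob_witness_def)
  ultimately show ?thesis
    using True by (simp add: beliefs_witness_def)
next
  case False
  then have "u = -1"
    using assms(3) by simp
  then show ?thesis
    using alice_witness_aggregate_stage2_B[OF assms(1,2)]
      alice_witness_aggregate_stage2_B[OF valid_bob_witness assms(2)]
    by (simp add: beliefs_witness_def)
qed

lemma wPBE_witness: "wPBE alice_witness bob_witness beliefs_witness"
  unfolding wPBE_def seq_rational_def
  using valid_alice_witness valid_bob_witness valid_beliefs_witness bayes_consistent_witness
    alice_witness_stage1_rational alice_witness_stage2_rational
    bob_witness_stage1_rational bob_witness_stage2_rational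
  by blast

lemma JA_witness: "JA alice_witness bob_witness = 1"
  unfolding JA_def cont1_A_def stage2_A_def
  by (simp add: alice_witness_def bob_witness_def rA1_def rA2_def S1_def)

theorem proposition1:
  shows "{(JA a b, JB a b) | a b \<mu>. wPBE a b \<mu> \<and> K_based a}
         \<subset> {(JA a b, JB a b) | a b \<mu>. wPBE a b \<mu>}"
proof -
  let ?w = "(JA alice_witness bob_witness, JB alice_witness bob_witness)"
  have "?w \<in> {(JA a b, JB a b) | a b \<mu>. wPBE a b \<mu>}"
    using wPBE_witness by blast
  moreover have "?w \<notin> {(JA a b, JB a b) | a b \<mu>. wPBE a b \<mu> \<and> K_based a}"
    using wPBE_K_based_JA_nonpos JA_witness by fastforce
  ultimately show ?thesis
    by blast
qed

end
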